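(* Let $G=(V,E)$ be a connected graph with $n$ vertices and $m\ge1$ edges $e_1,\dots,e_m$ with positive integer weights $w_1,\dots,w_m$, and let $w_{\max}=\max_i w_i$. Consider the (1+1)~EA for the minimum spanning tree problem started with an arbitrary bit string $x^{(0)}\in\{0,1\}^m$ that encodes a spanning tree of $G$. Then its expected optimization time (the expected first time $t$ at which $x^{(t)}$ encodes a minimum spanning tree) is at most $$2\mathrm{e}\, m^2\,(1+\ln m+\ln w_{\max}).$$
   Context: A bit string $x\in\{0,1\}^m$ encodes the edge set $\{e_i: x_i=1\}$; its weight is $w(x)=\sum_{i=1}^m w_ix_i$. The (1+1)~EA for the MST problem, started at a spanning tree $x^{(0)}$: for $t=0,1,2,\dots$, sample $y$ by flipping each bit of $x^{(t)}$ independently with probability $1/m$; set $x^{(t+1)}:=y$ if $y$ encodes a spanning tree of $G$ and $w(y)\le w(x^{(t)})$, and $x^{(t+1)}:=x^{(t)}$ otherwise. (This is the behavior of minimizing the fitness $w(x)+p(x)$ where the penalty $p$ ensures that once a spanning tree is reached, non-spanning-trees are never accepted.) *)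

theory Defs
  imports "HOL-Probability.Probability"
begin

definition simple_graph :: "'a set \<Rightarrow> nat \<Rightarrow> (nat \<Rightarrow> 'a set) \<Rightarrow> bool" where
  "simple_graph V m e \<longleftrightarrow> finite V \<and> (\<forall>i<m. e i \<subseteq> V \<and> card (e i) = 2) \<and> inj_on e {0..<m}"

definition adj :: "(nat \<Rightarrow> 'a set) \<Rightarrow> nat set \<Rightarrow> ('a \<times> 'a) set" where
  "adj e S = {(u, v). \<exists>i\<in>S. e i = {u, v}}"

definition connected_on :: "'a set \<Rightarrow> (nat \<Rightarrow> 'a set) \<Rightarrow> nat set \<Rightarrow> bool" where
  "connected_on V e S \<longleftrightarrow> (\<forall>u\<in>V. \<forall>v\<in>V. (u, v) \<in> (adj e S)\<^sup>*)"

definition has_cycle :: "(nat \<Rightarrow> 'a set) \<Rightarrow> nat set \<Rightarrow> bool" where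
  "has_cycle e S \<longleftrightarrow> (\<exists>vs. length vs \<ge> 3 \<and> distinct vs \<and>
      (\<forall>j<length vs. (vs ! j, vs ! ((j + 1) mod length vs)) \<in> adj e S))"

definition spanning_tree_edges :: "'a set \<Rightarrow> nat \<Rightarrow> (nat \<Rightarrow> 'a set) \<Rightarrow> nat set \<Rightarrow> bool" where
  "spanning_tree_edges V m e S \<longleftrightarrow> S \<subseteq> {0..<m} \<and> connected_on V e S \<and> \<not> has_cycle e S"

text \<open>Bit strings in {0,1}^m are functions nat => bool (only positions < m matter).\<close>
definition edges_of :: "nat \<Rightarrow> (nat \<Rightarrow> bool) \<Rightarrow> nat set" where
  "edges_of m x = {i. i < m \<and> x i}"

definition is_st :: "'a set \<Rightarrow> nat \<Rightarrow> (nat \<Rightarrow> 'a set) \<Rightarrow> (nat \<Rightarrow> bool) \<Rightarrow> bool" where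
  "is_st V m e x \<longleftrightarrow> spanning_tree_edges V m e (edges_of m x)"

definition weight :: "nat \<Rightarrow> (nat \<Rightarrow> nat) \<Rightarrow> (nat \<Rightarrow> bool) \<Rightarrow> nat" where
  "weight m w x = (\<Sum>i<m. w i * (if x i then 1 else 0))"

definition is_mst :: "'a set \<Rightarrow> nat \<Rightarrow> (nat \<Rightarrow> 'a set) \<Rightarrow> (nat \<Rightarrow> nat) \<Rightarrow> (nat \<Rightarrow> bool) \<Rightarrow> bool" where
  "is_mst V m e w x \<longleftrightarrow> is_st V m e x \<and> (\<forall>y. is_st V m e y \<longrightarrow> weight m w x \<le> weight m w y)"

definition ea_step :: "'a set \<Rightarrow> nat \<Rightarrow> (nat \<Rightarrow> 'a set) \<Rightarrow> (nat \<Rightarrow> nat) \<Rightarrow> (nat \<Rightarrow> bool) \<Rightarrow> (nat \<Rightarrow> bool) pmf" where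
  "ea_step V m e w x =
     map_pmf (\<lambda>flip. let y = (\<lambda>i. x i \<noteq> flip i) in
                     if is_st V m e y \<and> weight m w y \<le> weight m w x then y else x)
       (Pi_pmf {0..<m} False (\<lambda>_. bernoulli_pmf (1 / real m)))"

text \<open>Law of the trajectory prefix [x^(0), ..., x^(t)].\<close>
fun ea_traj :: "'a set \<Rightarrow> nat \<Rightarrow> (nat \<Rightarrow> 'a set) \<Rightarrow> (nat \<Rightarrow> nat) \<Rightarrow> (nat \<Rightarrow> bool) \<Rightarrow> nat \<Rightarrow> (nat \<Rightarrow> bool) list pmf" where
  "ea_traj V m e w x0 0 = return_pmf [x0]"
| "ea_traj V m e w x0 (Suc t) =
     bind_pmf (ea_traj V m e w x0 t) (\<lambda>xs. map_pmf (\<lambda>y. xs @ [y]) (ea_step V m e w (last xs)))"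

text \<open>Expected optimization time E[T], T = min{t. x^(t) is an MST}, via the tail-sum
  formula E[T] = sum_{t>=0} P(T > t) (value in [0, infinity]).\<close>
definition expected_opt_time :: "'a set \<Rightarrow> nat \<Rightarrow> (nat \<Rightarrow> 'a set) \<Rightarrow> (nat \<Rightarrow> nat) \<Rightarrow> (nat \<Rightarrow> bool) \<Rightarrow> ennreal" where
  "expected_opt_time V m e w x0 =
     (\<Sum>t. ennreal (measure_pmf.prob (ea_traj V m e w x0 t) {xs. \<forall>y\<in>set xs. \<not> is_mst V m e w y}))"

end

theory Submission
  imports Defs "HOL-Library.Transitive_Closure_Table"
begin

(* The proof is a multiplicative drift argument for the potential
   gap(x) = w(x) - w_opt of the current spanning tree x.
   1. Graph theory (locale edge_indexed_graph): connected components of edge sets,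
      the rank formula |V| <= #components(S) + |S| with equality iff S is a forest,
      the augmentation property of forests and the exchange property of trees.
   2. Exchange argument: the improving swaps (f, c) of a spanning tree x -- remove the
      tree edge f, add c with w c <= w f, obtain a spanning tree again -- have total
      gain sum (w f - w c) >= gap x.  It is proved level by level: for every weight
      threshold t the optimal tree has at most as many extra light edges as there are
      swaps crossing t.
   3. Drift (locale mst_ea): each such swap is performed by a mutation flipping
      exactly its two bits, which has probability >= delta = 1/(e m^2); hence
      E[gap x'] <= (1 - delta) gap x, and P(T > t) <= E[gap x_t] <= (1 - delta)^t gap x_0.
   4. A tail-sum estimate turns this into E[T] <= (1 + ln D)/delta + 1 for any bound
      D >= gap x_0, and D = m w_max yields the theorem. *)

locale edge_indexed_graph =
  fixes V :: "'a set" and m :: nat and e :: "nat \<Rightarrow> 'a set"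
  assumes simple: "simple_graph V m e"
begin

definition reach :: "nat set \<Rightarrow> ('a \<times> 'a) set" where
  "reach S = (adj e S)\<^sup>*"

definition component :: "nat set \<Rightarrow> 'a \<Rightarrow> 'a set" where
  "component S v = {u\<in>V. (v, u) \<in> reach S}"

definition ncomp :: "nat set \<Rightarrow> nat" where
  "ncomp S = card (component S ` V)"

lemma finite_V: "finite V"
  using simple by (simp add: simple_graph_def)

lemma edge_ends: "i < m \<Longrightarrow> \<exists>u v. e i = {u, v} \<and> u \<noteq> v \<and> u \<in> V \<and> v \<in> V"
  using simple unfolding simple_graph_def by (metis card_2_iff insert_subset)

lemma edge_inj: "i < m \<Longrightarrow> j < m \<Longrightarrow> e i = e j \<Longrightarrow> i = j"
  using simple unfolding simple_graph_def inj_on_def by auto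

lemma adj_sym: "(a, b) \<in> adj e S \<Longrightarrow> (b, a) \<in> adj e S"
  unfolding adj_def by (auto simp: insert_commute)

lemma adj_mono: "S \<subseteq> S' \<Longrightarrow> adj e S \<subseteq> adj e S'"
  unfolding adj_def by auto

lemma adj_insert: "e i = {u, v} \<Longrightarrow> adj e (insert i S) = adj e S \<union> {(u, v), (v, u)}"
  unfolding adj_def by (auto simp: doubleton_eq_iff)

lemma reach_refl [simp]: "(a, a) \<in> reach S"
  unfolding reach_def by simp

lemma reach_sym: "(a, b) \<in> reach S \<Longrightarrow> (b, a) \<in> reach S"
proof -
  have "sym (adj e S)" using adj_sym by (auto simp: sym_def)
  then have "sym (reach S)" unfolding reach_def by (rule sym_rtrancl)
  then show "(a, b) \<in> reach S \<Longrightarrow> (b, a) \<in> reach S" by (auto simp: sym_def)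
qed

lemma reach_trans: "(a, b) \<in> reach S \<Longrightarrow> (b, c) \<in> reach S \<Longrightarrow> (a, c) \<in> reach S"
  unfolding reach_def by (rule rtrancl_trans)

lemma reach_mono: "S \<subseteq> S' \<Longrightarrow> reach S \<subseteq> reach S'"
  unfolding reach_def by (intro rtrancl_mono adj_mono)

lemma adj_reach: "(a, b) \<in> adj e S \<Longrightarrow> (a, b) \<in> reach S"
  unfolding reach_def by auto

lemma reach_insert:
  assumes ei: "e i = {u, v}"
  shows "reach (insert i S) = reach S \<union>
    {(a, b). (a, u) \<in> reach S \<and> (v, b) \<in> reach S \<or> (a, v) \<in> reach S \<and> (u, b) \<in> reach S}"
    (is "_ = ?R")
proof
  show "reach (insert i S) \<subseteq> ?R"
  proof (rule subrelI)
    fix a b assume "(a, b) \<in> reach (insert i S)"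
    then have "(a, b) \<in> (adj e S \<union> {(u, v), (v, u)})\<^sup>*"
      unfolding reach_def adj_insert[OF ei] .
    then show "(a, b) \<in> ?R"
    proof (induction rule: rtrancl_induct)
      case (step y z)
      then consider "(y, z) \<in> adj e S" | "y = u" "z = v" | "y = v" "z = u" by auto
      then show ?case
      proof cases
        case 1
        then have "(y, z) \<in> reach S" by (rule adj_reach)
        with step.IH show ?thesis by (auto intro: reach_trans)
      next
        case 2 with step.IH show ?thesis by (auto intro: reach_trans reach_sym)
      next
        case 3 with step.IH show ?thesis by (auto intro: reach_trans reach_sym)
      qed
    qed simp
  qed
  have "reach S \<subseteq> reach (insert i S)" by (rule reach_mono) auto
  moreover have "(u, v) \<in> reach (insert i S)" "(v, u) \<in> reach (insert i S)"
    using ei by (auto intro!: adj_reach simp: adj_def)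
  ultimately show "?R \<subseteq> reach (insert i S)" by (auto intro: reach_trans)
qed

lemma reach_insert_connected:
  assumes ei: "e i = {u, v}" and uv: "(u, v) \<in> reach S"
  shows "reach (insert i S) = reach S"
proof -
  have vu: "(v, u) \<in> reach S" using uv by (rule reach_sym)
  have "(a, b) \<in> reach S"
    if "(a, u) \<in> reach S \<and> (v, b) \<in> reach S \<or> (a, v) \<in> reach S \<and> (u, b) \<in> reach S" for a b
    using that by (metis reach_trans uv vu)
  then show ?thesis unfolding reach_insert[OF ei] by blast
qed

lemma reach_cong:
  assumes "(u, a) \<in> reach S"
  shows "(a, b) \<in> reach S \<longleftrightarrow> (u, b) \<in> reach S"
  using reach_trans[OF assms, of b] reach_trans[OF reach_sym[OF assms], of b] by blast

lemma component_self: "a \<in> V \<Longrightarrow> a \<in> component S a"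
  unfolding component_def by simp

lemma component_eq_iff:
  assumes "a \<in> V" "b \<in> V"
  shows "component S a = component S b \<longleftrightarrow> (a, b) \<in> reach S"
proof
  assume "component S a = component S b"
  then have "b \<in> component S a" using component_self[OF assms(2)] by simp
  then show "(a, b) \<in> reach S" unfolding component_def by simp
next
  assume "(a, b) \<in> reach S"
  then have "(b, a) \<in> reach S" by (rule reach_sym)
  from reach_cong[OF this] show "component S a = component S b" unfolding component_def by simp
qed

lemma ncomp_insert_connected:
  "e i = {u, v} \<Longrightarrow> (u, v) \<in> reach S \<Longrightarrow> ncomp (insert i S) = ncomp S"
  unfolding ncomp_def component_def by (simp add: reach_insert_connected)

lemma component_insert:
  assumes ei: "e i = {u, v}" and a: "a \<in> V"
  shows "component (insert i S) a =
    (if a \<in> component S u \<union> component S v then component S u \<union> component S v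
     else component S a)"
proof -
  have C': "component (insert i S) a = {b\<in>V. (a, b) \<in> reach S
      \<or> (a, u) \<in> reach S \<and> (v, b) \<in> reach S \<or> (a, v) \<in> reach S \<and> (u, b) \<in> reach S}"
    unfolding component_def reach_insert[OF ei] by simp
  consider (u) "(u, a) \<in> reach S" | (v) "(v, a) \<in> reach S"
    | (neither) "(u, a) \<notin> reach S" "(v, a) \<notin> reach S" by blast
  then show ?thesis
  proof cases
    case u
    show ?thesis unfolding C' reach_cong[OF u] using u a by (auto simp: component_def)
  next
    case v
    show ?thesis unfolding C' reach_cong[OF v] using v a by (auto simp: component_def)
  next
    case neither
    then have "(a, u) \<notin> reach S" "(a, v) \<notin> reach S" using reach_sym by blast+
    then show ?thesis unfolding C' using neither by (auto simp: component_def)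
  qed
qed

lemma components_insert:
  assumes ei: "e i = {u, v}" and V: "u \<in> V" "v \<in> V"
  shows "component (insert i S) ` V = insert (component S u \<union> component S v)
           (component S ` V - {component S u, component S v})"
    (is "?C' ` V = insert ?U (?C ` V - {?Cu, ?Cv})")
proof (intro equalityI subsetI)
  fix X assume "X \<in> ?C' ` V"
  then obtain a where a: "a \<in> V" "X = ?C' a" by auto
  show "X \<in> insert ?U (?C ` V - {?Cu, ?Cv})"
  proof (cases "a \<in> ?U")
    case False
    then have "?C a \<noteq> ?Cu" "?C a \<noteq> ?Cv" using component_self[OF a(1), of S] by auto
    then show ?thesis using component_insert[OF ei a(1)] a False by auto
  qed (use component_insert[OF ei a(1)] a in simp)
next
  fix X assume X: "X \<in> insert ?U (?C ` V - {?Cu, ?Cv})"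
  show "X \<in> ?C' ` V"
  proof (cases "X = ?U")
    case True
    then have "?C' u = X" using component_insert[OF ei V(1)] component_self[OF V(1)] by simp
    then show ?thesis using V by blast
  next
    case False
    then obtain a where a: "a \<in> V" "X = ?C a" "?C a \<noteq> ?Cu" "?C a \<noteq> ?Cv" using X by auto
    then have "a \<notin> ?U" using V component_eq_iff reach_sym unfolding component_def by blast
    then have "?C' a = X" using component_insert[OF ei a(1)] a by simp
    then show ?thesis using a by blast
  qed
qed

lemma ncomp_insert_bridge:
  assumes ei: "e i = {u, v}" and V: "u \<in> V" "v \<in> V" and nc: "(u, v) \<notin> reach S"
  shows "ncomp S = Suc (ncomp (insert i S))"
proof -
  let ?C = "component S"
  have ne: "?C u \<noteq> ?C v" using component_eq_iff V nc by blast
  have new: "?C u \<union> ?C v \<notin> ?C ` V - {?C u, ?C v}"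
  proof
    assume "?C u \<union> ?C v \<in> ?C ` V - {?C u, ?C v}"
    then obtain a where a: "a \<in> V" "?C a = ?C u \<union> ?C v" "?C a \<noteq> ?C u" by auto
    have "u \<in> ?C a" using a(2) component_self[OF V(1)] by simp
    then have "(a, u) \<in> reach S" unfolding component_def by simp
    then show False using a(1,3) component_eq_iff V(1) by blast
  qed
  have fin: "finite (?C ` V)" using finite_V by simp
  have "ncomp (insert i S) = Suc (card (?C ` V - {?C u, ?C v}))"
    unfolding ncomp_def components_insert[OF ei V] using fin new by simp
  also have "card (?C ` V - {?C u, ?C v}) = card (?C ` V) - 2"
    using fin ne V by (subst card_Diff_subset) auto
  finally have "ncomp (insert i S) = Suc (card (?C ` V) - 2)" .
  moreover have "card {?C u, ?C v} \<le> card (?C ` V)" using fin V by (intro card_mono) auto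
  ultimately show ?thesis using ne unfolding ncomp_def by simp
qed

lemma ncomp_insert_le:
  assumes "i < m"
  shows "ncomp (insert i S) \<le> ncomp S"
proof -
  obtain u v where uv: "e i = {u, v}" "u \<in> V" "v \<in> V" using edge_ends[OF assms] by blast
  show ?thesis
  proof (cases "(u, v) \<in> reach S")
    case True then show ?thesis using ncomp_insert_connected[OF uv(1)] by simp
  next
    case False then show ?thesis using ncomp_insert_bridge[OF uv False] by simp
  qed
qed

lemma ncomp_union_le:
  assumes "finite F" "F \<subseteq> {0..<m}"
  shows "ncomp (S \<union> F) \<le> ncomp S"
  using assms
proof (induction F rule: finite_induct)
  case (insert i F)
  have "ncomp (insert i (S \<union> F)) \<le> ncomp (S \<union> F)" using insert ncomp_insert_le by auto
  then show ?case using insert by simp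
qed simp

lemma ncomp_antimono:
  assumes "S \<subseteq> S'" "S' \<subseteq> {0..<m}"
  shows "ncomp S' \<le> ncomp S"
proof -
  have "S' = S \<union> (S' - S)" using assms by auto
  moreover have "finite (S' - S)" using assms(2) finite_subset by blast
  moreover have "S' - S \<subseteq> {0..<m}" using assms by auto
  ultimately show ?thesis using ncomp_union_le[of "S' - S" S] by simp
qed

lemma ncomp_empty: "ncomp {} = card V"
proof -
  have "adj e {} = {}" unfolding adj_def by simp
  then have "component {} a = {a}" if "a \<in> V" for a
    using that unfolding component_def reach_def by auto
  then have "component {} ` V = (\<lambda>a. {a}) ` V" by auto
  then show ?thesis unfolding ncomp_def by (simp add: card_image)
qed

lemma ncomp_pos: "V \<noteq> {} \<Longrightarrow> ncomp S \<ge> 1"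
  unfolding ncomp_def using finite_V by (simp add: Suc_le_eq card_gt_0_iff)

lemma connected_iff_ncomp:
  assumes "V \<noteq> {}"
  shows "connected_on V e S \<longleftrightarrow> ncomp S = 1"
proof
  assume "connected_on V e S"
  then have "component S a = V" if "a \<in> V" for a
    using that unfolding connected_on_def component_def reach_def by auto
  then have "component S ` V = {V}" using assms by auto
  then show "ncomp S = 1" unfolding ncomp_def by simp
next
  assume "ncomp S = 1"
  then obtain X where X: "component S ` V = {X}" unfolding ncomp_def by (auto simp: card_Suc_eq)
  show "connected_on V e S" unfolding connected_on_def
  proof (intro ballI)
    fix a b assume ab: "a \<in> V" "b \<in> V"
    then have "component S a = component S b" using X by blast
    then show "(a, b) \<in> (adj e S)\<^sup>*" using component_eq_iff ab unfolding reach_def by blast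
  qed
qed

lemma reach_along_list:
  assumes steps: "\<And>k. a \<le> k \<Longrightarrow> k < b \<Longrightarrow> (vs ! k, vs ! Suc k) \<in> reach S" and "a \<le> b"
  shows "(vs ! a, vs ! b) \<in> reach S"
  using \<open>a \<le> b\<close>
proof (induction rule: dec_induct)
  case (step n)
  then show ?case using reach_trans[OF step.IH steps[OF step.hyps(1,2)]] by simp
qed simp

abbreviation forest :: "nat set \<Rightarrow> bool" where
  "forest S \<equiv> \<not> has_cycle e S"

lemma has_cycle_mono: "S \<subseteq> S' \<Longrightarrow> has_cycle e S \<Longrightarrow> has_cycle e S'"
  unfolding has_cycle_def using adj_mono by blast

lemma forest_empty: "forest {}"
proof
  assume "has_cycle e {}"
  then obtain vs where "length vs \<ge> 3" "(vs ! 0, vs ! ((0 + 1) mod length vs)) \<in> adj e {}"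
    unfolding has_cycle_def by fastforce
  then show False unfolding adj_def by simp
qed

end

lemma cycle_step_neq_first:
  assumes d: "distinct vs" and L: "length vs \<ge> 3" and k: "1 \<le> k" "k < length vs"
  shows "{vs ! k, vs ! ((k + 1) mod length vs)} \<noteq> {vs ! 0, vs ! 1}"
proof
  assume eq: "{vs ! k, vs ! ((k + 1) mod length vs)} = {vs ! 0, vs ! 1}"
  have len: "0 < length vs" "1 < length vs" using L by auto
  have idx: "vs ! p = vs ! q \<longleftrightarrow> p = q" if "p < length vs" "q < length vs" for p q
    using nth_eq_iff_index_eq[OF d] that by simp
  have "vs ! k \<noteq> vs ! 0" using idx[of k 0] k len by simp
  with eq have "vs ! k = vs ! 1" by (auto simp: doubleton_eq_iff)
  then have k1: "k = 1" using idx[of k 1] k len by simp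
  have "vs ! 1 \<noteq> vs ! 0" using idx[of 1 0] len by simp
  with eq k1 have "vs ! ((k + 1) mod length vs) = vs ! 0" by (auto simp: doubleton_eq_iff)
  then have "(k + 1) mod length vs = 0" using idx[of "(k + 1) mod length vs" 0] len by simp
  with k1 L show False by simp
qed

context edge_indexed_graph
begin

lemma cycle_redundant_edge:
  assumes "has_cycle e S"
  shows "\<exists>i\<in>S. \<exists>u v. e i = {u, v} \<and> (u, v) \<in> reach (S - {i})"
proof -
  obtain vs where L: "length vs \<ge> 3" and d: "distinct vs"
    and cyc: "\<And>j. j < length vs \<Longrightarrow> (vs ! j, vs ! ((j + 1) mod length vs)) \<in> adj e S"
    using assms unfolding has_cycle_def by blast
  define L where "L = length vs"
  have "0 < length vs" using L by linarith
  from cyc[OF this] have "(vs ! 0, vs ! 1) \<in> adj e S" using L by simp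
  then obtain i where i: "i \<in> S" "e i = {vs ! 0, vs ! 1}" unfolding adj_def by auto
  have other: "(vs ! k, vs ! ((k + 1) mod L)) \<in> reach (S - {i})" if k: "1 \<le> k" "k < L" for k
  proof -
    obtain j where j: "j \<in> S" "e j = {vs ! k, vs ! ((k + 1) mod L)}"
      using cyc[of k] k unfolding adj_def L_def by blast
    have "j \<noteq> i" using i j cycle_step_neq_first[OF d L k[unfolded L_def]] unfolding L_def by auto
    then show ?thesis using j by (intro adj_reach) (auto simp: adj_def)
  qed
  have "(vs ! k, vs ! Suc k) \<in> reach (S - {i})" if "1 \<le> k" "k < L - 1" for k
    using other[of k] that by simp
  moreover have "1 \<le> L - 1" using L unfolding L_def by linarith
  ultimately have "(vs ! 1, vs ! (L - 1)) \<in> reach (S - {i})" by (rule reach_along_list)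
  moreover have "L - 1 < L" "L - 1 + 1 = L" using L unfolding L_def by linarith+
  then have "L - 1 < L" "(L - 1 + 1) mod L = 0" by (simp_all only: mod_self)
  then have "(vs ! (L - 1), vs ! 0) \<in> reach (S - {i})"
    using other[of "L - 1"] \<open>1 \<le> L - 1\<close> by simp
  ultimately have "(vs ! 1, vs ! 0) \<in> reach (S - {i})" by (rule reach_trans)
  then show ?thesis using i reach_sym by blast
qed

lemma closed_path_cycle:
  assumes p: "rtrancl_path r v xs u" and d: "distinct (v # xs)" and len: "length xs \<ge> 2"
    and r: "\<And>a b. r a b \<Longrightarrow> (a, b) \<in> adj e S" and uv: "(u, v) \<in> adj e S"
  shows "has_cycle e S"
  unfolding has_cycle_def
proof (intro exI conjI allI impI)
  let ?vs = "v # xs"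
  show "length ?vs \<ge> 3" "distinct ?vs" using len d by auto
  fix j assume j: "j < length ?vs"
  show "(?vs ! j, ?vs ! ((j + 1) mod length ?vs)) \<in> adj e S"
  proof (cases "j < length xs")
    case True
    then show ?thesis using r[OF rtrancl_path_nth[OF p True]] by simp
  next
    case False
    then have "j = length xs" using j by simp
    moreover have "xs \<noteq> []" using len by auto
    then have "?vs ! length xs = u" using rtrancl_path_last[OF p]
      by (cases xs rule: rev_cases) (auto simp: nth_append)
    ultimately show ?thesis using uv by simp
  qed
qed

text \<open>If the end points of an edge i \<in> S remain connected without it, S has a cycle:
  a shortest connecting path together with edge i.\<close>
lemma redundant_edge_cycle:
  assumes S: "S \<subseteq> {0..<m}" and i: "i \<in> S" and ei: "e i = {u, v}" and uv: "u \<noteq> v"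
    and c: "(v, u) \<in> reach (S - {i})"
  shows "has_cycle e S"
proof -
  define r where "r = (\<lambda>a b. (a, b) \<in> adj e (S - {i}))"
  have "r\<^sup>*\<^sup>* v u" using c unfolding reach_def r_def by (simp add: rtranclp_rtrancl_eq)
  then obtain xs where p: "rtrancl_path r v xs u" and d: "distinct (v # xs)"
    using rtranclp_eq_rtrancl_path rtrancl_path_distinct by metis
  have ne: "xs \<noteq> []" using p uv by (auto elim: rtrancl_path.cases)
  have "length xs \<ge> 2"
  proof (rule ccontr)
    assume "\<not> length xs \<ge> 2"
    with ne have "length xs = Suc 0" by (cases xs) (auto simp: not_le)
    then obtain y where xs: "xs = [y]" by (auto simp: length_Suc_conv)
    with p have "r v y" and "rtrancl_path r y [] u" by (auto elim: rtrancl_path.cases)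
    then have "r v y" "y = u" by (auto elim: rtrancl_path.cases)
    then obtain j where j: "j \<in> S - {i}" "e j = {v, u}" unfolding r_def adj_def by auto
    then have "e j = e i" using ei by (auto simp: insert_commute)
    moreover have "j < m" "i < m" using j i S by auto
    ultimately have "j = i" using edge_inj by blast
    with j show False by simp
  qed
  moreover have "(a, b) \<in> adj e S" if "r a b" for a b using that adj_mono[of "S - {i}" S] unfolding r_def by blast
  moreover have "(u, v) \<in> adj e S" using i ei unfolding adj_def by blast
  ultimately show ?thesis by (rule closed_path_cycle[OF p d])
qed

lemma insert_connected_cycle:
  assumes S: "S \<subseteq> {0..<m}" and i: "i < m" "i \<notin> S" and ei: "e i = {u, v}"
    and c: "(u, v) \<in> reach S"
  shows "has_cycle e (insert i S)"
proof -
  have "u \<noteq> v" using edge_ends[OF i(1)] ei by (metis doubleton_eq_iff)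
  moreover have "insert i S - {i} = S" using i by auto
  ultimately show ?thesis
    using redundant_edge_cycle[of "insert i S" i u v] S i ei reach_sym[OF c] by auto
qed

text \<open>Adding a bridge to a forest keeps it a forest: a cycle would contain a redundant
  edge g; g cannot be the bridge, and any other redundant g would give a cycle in S or a
  path between the ends of the bridge inside S.\<close>
lemma insert_bridge_forest:
  assumes S: "S \<subseteq> {0..<m}" and i: "i < m" "i \<notin> S" and ei: "e i = {u, v}"
    and nc: "(u, v) \<notin> reach S" and forest: "forest S"
  shows "forest (insert i S)"
proof
  assume "has_cycle e (insert i S)"
  then obtain g a b where g: "g \<in> insert i S" "e g = {a, b}"
    and c: "(a, b) \<in> reach (insert i S - {g})"
    using cycle_redundant_edge by blast
  show False
  proof (cases "g = i")
    case True
    then have "insert i S - {g} = S" using i by auto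
    with c have ab: "(a, b) \<in> reach S" by simp
    have "{a, b} = {u, v}" using g(2) ei True by simp
    then have "(u, v) \<in> reach S" using ab reach_sym[OF ab] by (auto simp: doubleton_eq_iff)
    with nc show False ..
  next
    case False
    then have gS: "g \<in> S" using g by simp
    have ab_nc: "(a, b) \<notin> reach (S - {g})"
    proof
      assume ab: "(a, b) \<in> reach (S - {g})"
      have "e g = {b, a}" using g(2) by (simp add: insert_commute)
      moreover have "b \<noteq> a" using edge_ends[of g] g gS S by (metis atLeastLessThan_iff doubleton_eq_iff subsetD)
      ultimately have "has_cycle e S" using redundant_edge_cycle[OF S gS _ _ ab] by blast
      with forest show False by simp
    qed
    have "insert i S - {g} = insert i (S - {g})" using False by auto
    with c have "(a, b) \<in> reach (insert i (S - {g}))" by simp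
    with ab_nc have "(a, u) \<in> reach (S - {g}) \<and> (v, b) \<in> reach (S - {g})
        \<or> (a, v) \<in> reach (S - {g}) \<and> (u, b) \<in> reach (S - {g})"
      unfolding reach_insert[OF ei] by blast
    moreover have "reach (S - {g}) \<subseteq> reach S" by (rule reach_mono) auto
    ultimately have through: "(a, u) \<in> reach S \<and> (v, b) \<in> reach S \<or> (a, v) \<in> reach S \<and> (u, b) \<in> reach S"
      by blast
    have ab: "(a, b) \<in> reach S" using g(2) gS by (intro adj_reach) (auto simp: adj_def)
    from through show False
    proof
      assume "(a, u) \<in> reach S \<and> (v, b) \<in> reach S"
      then have "(u, v) \<in> reach S"
        using reach_trans[OF reach_trans[OF reach_sym ab] reach_sym] by blast
      with nc show False ..
    next
      assume "(a, v) \<in> reach S \<and> (u, b) \<in> reach S"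
      then have "(v, u) \<in> reach S"
        using reach_trans[OF reach_trans[OF reach_sym ab] reach_sym] by blast
      with nc reach_sym show False by blast
    qed
  qed
qed

lemma rank_formula:
  assumes "finite S" "S \<subseteq> {0..<m}"
  shows "card V \<le> ncomp S + card S \<and> (forest S \<longleftrightarrow> ncomp S + card S = card V)"
  using assms
proof (induction S rule: finite_induct)
  case empty then show ?case using ncomp_empty forest_empty by simp
next
  case (insert i S)
  have i: "i < m" and S: "S \<subseteq> {0..<m}" using insert by auto
  obtain u v where uv: "e i = {u, v}" "u \<in> V" "v \<in> V" using edge_ends[OF i] by blast
  have card: "card (insert i S) = Suc (card S)" using insert by simp
  show ?case
  proof (cases "(u, v) \<in> reach S")
    case True
    then show ?thesis
      using ncomp_insert_connected[OF uv(1) True] insert_connected_cycle[OF S i insert(2) uv(1) True]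
        insert.IH[OF S] card by simp
  next
    case False
    have "forest (insert i S) \<longleftrightarrow> forest S"
      using insert_bridge_forest[OF S i insert(2) uv(1) False] has_cycle_mono[of S "insert i S"] by blast
    then show ?thesis
      using ncomp_insert_bridge[OF uv False] insert.IH[OF S] card by simp
  qed
qed

lemma spanning_tree_props:
  assumes "spanning_tree_edges V m e T" "V \<noteq> {}"
  shows "ncomp T = 1" "forest T" "card T + 1 = card V" "T \<subseteq> {0..<m}" "finite T"
proof -
  show T: "T \<subseteq> {0..<m}" using assms unfolding spanning_tree_edges_def by simp
  show f: "finite T" using T finite_subset by blast
  show c: "ncomp T = 1" using assms connected_iff_ncomp unfolding spanning_tree_edges_def by simp
  show a: "forest T" using assms unfolding spanning_tree_edges_def by simp
  show "card T + 1 = card V" using rank_formula[OF f T] a c by simp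
qed

lemma spanning_treeI:
  assumes "T \<subseteq> {0..<m}" "ncomp T = 1" "card T + 1 = card V" "V \<noteq> {}"
  shows "spanning_tree_edges V m e T"
proof -
  have f: "finite T" using assms finite_subset by blast
  have "forest T" using rank_formula[OF f assms(1)] assms by simp
  then show ?thesis using assms connected_iff_ncomp unfolding spanning_tree_edges_def by simp
qed

lemma ncomp_union_connected:
  assumes "finite F" "\<And>c. c \<in> F \<Longrightarrow> \<exists>u v. e c = {u, v} \<and> (u, v) \<in> reach A"
  shows "ncomp (A \<union> F) = ncomp A"
  using assms
proof (induction F rule: finite_induct)
  case (insert c F)
  obtain u v where uv: "e c = {u, v}" "(u, v) \<in> reach A" using insert.prems by blast
  have "reach A \<subseteq> reach (A \<union> F)" by (rule reach_mono) simp
  then have "ncomp (insert c (A \<union> F)) = ncomp (A \<union> F)"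
    using uv by (intro ncomp_insert_connected[OF uv(1)]) auto
  then show ?case using insert by simp
qed simp

text \<open>Otherwise all edges of B would be spanned by A, so A \<union> B
  would have as many components as A, contradicting the rank formula.\<close>
lemma forest_augment:
  assumes A: "A \<subseteq> {0..<m}" and B: "B \<subseteq> {0..<m}" and fA: "forest A" and fB: "forest B"
    and lt: "card A < card B"
  shows "\<exists>c\<in>B - A. forest (insert c A)"
proof (rule ccontr)
  assume no_aug: "\<not> ?thesis"
  have finA: "finite A" and finB: "finite B" using A B finite_subset by blast+
  have spanned: "\<exists>u v. e c = {u, v} \<and> (u, v) \<in> reach A" if "c \<in> B - A" for c
  proof -
    have cm: "c < m" "c \<notin> A" using that B by auto
    obtain u v where uv: "e c = {u, v}" using edge_ends[OF cm(1)] by blast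
    have "(u, v) \<in> reach A"
      using insert_bridge_forest[OF A cm uv _ fA] no_aug that by blast
    then show ?thesis using uv by blast
  qed
  have "ncomp (A \<union> (B - A)) = ncomp A"
    using finB spanned by (intro ncomp_union_connected) auto
  then have "ncomp (A \<union> B) = ncomp A" by (simp add: Un_Diff_cancel)
  moreover have "ncomp (A \<union> B) \<le> ncomp B" using ncomp_antimono[of B "A \<union> B"] A B by simp
  moreover have "ncomp A + card A = card V" using rank_formula[OF finA A] fA by simp
  moreover have "ncomp B + card B = card V" using rank_formula[OF finB B] fB by simp
  ultimately show False using lt by linarith
qed

lemma forest_augment_many:
  assumes A: "A \<subseteq> {0..<m}" and B: "B \<subseteq> {0..<m}" and fA: "forest A" and fB: "forest B"
  shows "\<exists>C \<subseteq> B - A. card C = card B - card A \<and> forest (A \<union> C)"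
proof -
  have "\<exists>C \<subseteq> B - A. card C = k \<and> forest (A \<union> C)" if "k \<le> card B - card A" for k
    using that
  proof (induction k)
    case 0 then show ?case using fA by (intro exI[of _ "{}"]) auto
  next
    case (Suc k)
    then obtain C where C: "C \<subseteq> B - A" "card C = k" "forest (A \<union> C)" by auto
    have CB: "C \<subseteq> {0..<m}" using C B by auto
    have fin: "finite A" "finite C" using finite_subset[OF A] finite_subset[OF CB] by auto
    have "card (A \<union> C) = card A + k" using C fin by (subst card_Un_disjoint) auto
    then have "card (A \<union> C) < card B" using Suc by simp
    moreover have "A \<union> C \<subseteq> {0..<m}" using A B C by auto
    ultimately obtain c where c: "c \<in> B - (A \<union> C)" "forest (insert c (A \<union> C))"
      using forest_augment[OF _ B C(3) fB] by blast
    show ?case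
    proof (intro exI[of _ "insert c C"] conjI)
      show "insert c C \<subseteq> B - A" using c C by auto
      show "card (insert c C) = Suc k" using c C fin by simp
      show "forest (A \<union> insert c C)" using c by simp
    qed
  qed
  then show ?thesis by blast
qed

lemma ncomp_remove_bridges:
  assumes H: "finite H" "H \<subseteq> X" "H \<subseteq> {0..<m}"
    and bridges: "\<And>h a b. h \<in> H \<Longrightarrow> e h = {a, b} \<Longrightarrow> (a, b) \<notin> reach (X - {h})"
  shows "ncomp (X - H) = ncomp X + card H"
proof -
  have "ncomp (X - F) = ncomp X + card F" if "F \<subseteq> H" for F
  proof -
    have "finite F" using that H(1) finite_subset by blast
    then show ?thesis using that
    proof (induction F rule: finite_induct)
      case (insert h F)
      then have hH: "h \<in> H" by simp
      then have "h < m" using H(3) by auto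
      then obtain a b where ab: "e h = {a, b}" "a \<in> V" "b \<in> V" using edge_ends by blast
      have "(a, b) \<notin> reach (X - {h})" using bridges[OF hH ab(1)] .
      moreover have "reach ((X - F) - {h}) \<subseteq> reach (X - {h})" by (rule reach_mono) auto
      ultimately have nc: "(a, b) \<notin> reach ((X - F) - {h})" by blast
      have "insert h ((X - F) - {h}) = X - F" using insert hH H(2) by auto
      then have "ncomp ((X - F) - {h}) = Suc (ncomp (X - F))"
        using ncomp_insert_bridge[OF ab nc] by simp
      moreover have "X - insert h F = (X - F) - {h}" by auto
      ultimately show ?case using insert by simp
    qed simp
  qed
  then show ?thesis by simp
qed

text \<open>If no edge of T - A were redundant in X = T + c,
  removing them all would leave A + c with too many components for a forest.\<close>
lemma tree_exchange:
  assumes T: "spanning_tree_edges V m e T" and V: "V \<noteq> {}" and A: "A \<subseteq> T"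
    and c: "c < m" "c \<notin> T" and forest: "forest (insert c A)"
  shows "\<exists>g\<in>T - A. spanning_tree_edges V m e (insert c T - {g})"
proof -
  note tp = spanning_tree_props[OF T V]
  define X where "X = insert c T"
  define H where "H = T - A"
  have X: "X \<subseteq> {0..<m}" using tp c unfolding X_def by auto
  have "ncomp X \<le> ncomp T" using ncomp_antimono[of T X] X unfolding X_def by auto
  then have cX: "ncomp X = 1" using tp(1) ncomp_pos[OF V, of X] by simp
  have "\<exists>g\<in>H. \<exists>a b. e g = {a, b} \<and> (a, b) \<in> reach (X - {g})"
  proof (rule ccontr)
    assume "\<not> ?thesis"
    moreover have "finite H" "H \<subseteq> X" "H \<subseteq> {0..<m}" using tp unfolding H_def X_def by auto
    ultimately have "ncomp (X - H) = 1 + card H"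
      using ncomp_remove_bridges[of H X] cX by auto
    moreover have "X - H = insert c A" using A c unfolding X_def H_def by auto
    moreover have finA: "finite A" using tp A finite_subset by blast
    moreover have "card H = card T - card A" using A tp unfolding H_def by (simp add: card_Diff_subset finA)
    moreover have "card A \<le> card T" using A tp card_mono by blast
    moreover have "insert c A \<subseteq> {0..<m}" using A tp c by auto
    then have "ncomp (insert c A) + card (insert c A) = card V"
      using rank_formula[of "insert c A"] forest finA by simp
    moreover have "c \<notin> A" using A c by auto
    ultimately show False using finA tp(3) by simp
  qed
  then obtain g a b where g: "g \<in> H" "e g = {a, b}" "(a, b) \<in> reach (X - {g})" by blast
  have gX: "g \<in> X" using g H_def X_def by auto
  then have "insert g (X - {g}) = X" by auto
  then have "ncomp (X - {g}) = 1" using ncomp_insert_connected[OF g(2,3)] cX by simp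
  moreover have "card (X - {g}) = card T" using gX c tp unfolding X_def by simp
  ultimately have "spanning_tree_edges V m e (X - {g})"
    using X tp(3) by (intro spanning_treeI[OF _ _ _ V]) auto
  then show ?thesis using g unfolding H_def X_def by blast
qed

end

text \<open>This turns weight differences into counts of edges per level.\<close>
lemma sum_threshold_counts:
  fixes lo hi :: "'b \<Rightarrow> nat"
  assumes fin: "finite P" and bd: "\<And>p. p \<in> P \<Longrightarrow> lo p \<le> hi p \<and> hi p \<le> W"
  shows "(\<Sum>t<W. card {p\<in>P. lo p \<le> t \<and> t < hi p}) = (\<Sum>p\<in>P. hi p - lo p)"
proof -
  have "(\<Sum>t<W. card {p\<in>P. lo p \<le> t \<and> t < hi p})
      = (\<Sum>t<W. \<Sum>p\<in>P. if lo p \<le> t \<and> t < hi p then 1 else 0)"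
    using fin by (simp add: sum.inter_filter[symmetric])
  also have "\<dots> = (\<Sum>p\<in>P. \<Sum>t<W. if lo p \<le> t \<and> t < hi p then 1 else 0)"
    by (rule sum.swap)
  also have "\<dots> = (\<Sum>p\<in>P. hi p - lo p)"
  proof (intro sum.cong refl)
    fix p assume "p \<in> P"
    then have "{t\<in>{..<W}. lo p \<le> t \<and> t < hi p} = {lo p..<hi p}" using bd[of p] by auto
    then show "(\<Sum>t<W. if lo p \<le> t \<and> t < hi p then 1 else 0) = hi p - lo p"
      by (simp add: sum.inter_filter[symmetric])
  qed
  finally show ?thesis .
qed

text \<open>Layer decomposition of a sum of weights bounded by W: each element contributes
  w i levels where it is heavy and W - w i levels where it is light.\<close>
lemma weight_layers:
  fixes w :: "'b \<Rightarrow> nat"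
  assumes S: "finite S" and bd: "\<And>i. i \<in> S \<Longrightarrow> w i \<le> W"
  shows "(\<Sum>i\<in>S. w i) + (\<Sum>t<W. card {i\<in>S. w i \<le> t}) = W * card S"
proof -
  have "(\<Sum>t<W. card {i\<in>S. 0 \<le> t \<and> t < w i}) = (\<Sum>i\<in>S. w i - 0)"
    using S bd by (intro sum_threshold_counts) auto
  moreover have split: "card {i\<in>S. t < w i} + card {i\<in>S. w i \<le> t} = card S" for t
  proof -
    have "{i\<in>S. t < w i} \<inter> {i\<in>S. w i \<le> t} = {}" "{i\<in>S. t < w i} \<union> {i\<in>S. w i \<le> t} = S"
      by auto
    then show ?thesis using S by (metis card_Un_disjoint finite_Un)
  qed
  have "(\<Sum>t<W. card {i\<in>S. t < w i}) + (\<Sum>t<W. card {i\<in>S. w i \<le> t}) = (\<Sum>t<W. card S)"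
    unfolding sum.distrib[symmetric] split ..
  ultimately show ?thesis by simp
qed

lemma weight_edges_of: "weight m w x = (\<Sum>i\<in>edges_of m x. w i)"
proof -
  have "weight m w x = (\<Sum>i<m. if x i then w i else 0)"
    unfolding weight_def by (intro sum.cong) auto
  also have "\<dots> = (\<Sum>i\<in>{i\<in>{..<m}. x i}. w i)"
    by (rule sum.inter_filter[symmetric]) simp
  also have "{i\<in>{..<m}. x i} = edges_of m x" unfolding edges_of_def by auto
  finally show ?thesis .
qed

text \<open>Flipping the bits f and c: for f in and c out of x this removes edge f and adds c.\<close>
definition swap :: "(nat \<Rightarrow> bool) \<Rightarrow> nat \<Rightarrow> nat \<Rightarrow> nat \<Rightarrow> bool" where
  "swap x f c = (\<lambda>i. x i \<noteq> (i = f \<or> i = c))"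

lemma edges_of_swap:
  assumes "f < m" "c < m" "x f" "\<not> x c"
  shows "edges_of m (swap x f c) = insert c (edges_of m x) - {f}"
  using assms unfolding edges_of_def swap_def by auto

lemma weight_swap:
  assumes "f < m" "c < m" "x f" "\<not> x c"
  shows "weight m w (swap x f c) + w f = weight m w x + w c"
proof -
  define T where "T = edges_of m x"
  have fT: "f \<in> T" "c \<notin> T" and finT: "finite T"
    using assms unfolding T_def edges_of_def by auto
  have "(\<Sum>i\<in>insert c T. w i) = w f + (\<Sum>i\<in>insert c T - {f}. w i)"
    using fT finT by (intro sum.remove) auto
  then have "weight m w (swap x f c) + w f = (\<Sum>i\<in>insert c T. w i)"
    unfolding weight_edges_of edges_of_swap[OF assms] T_def[symmetric] by simp
  also have "\<dots> = weight m w x + w c"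
    unfolding weight_edges_of T_def[symmetric] using fT finT by simp
  finally show ?thesis .
qed

context edge_indexed_graph
begin

definition improving_swaps :: "(nat \<Rightarrow> nat) \<Rightarrow> (nat \<Rightarrow> bool) \<Rightarrow> (nat \<times> nat) set" where
  "improving_swaps w x = {(f, c). f < m \<and> c < m \<and> x f \<and> \<not> x c \<and>
     is_st V m e (swap x f c) \<and> w c \<le> w f}"

lemma finite_improving_swaps: "finite (improving_swaps w x)"
proof -
  have "improving_swaps w x \<subseteq> {..<m} \<times> {..<m}" unfolding improving_swaps_def by auto
  then show ?thesis by (rule finite_subset) simp
qed

text \<open>The spanning tree y has at most as many edges of weight \<le> t beyond
  those of x as there are improving swaps of x crossing level t: by forest augmentation
  the light edges of y extend the light edges of x, and each such extra edge c can be
  exchanged (tree exchange) against a heavy tree edge g, giving distinct swaps (g, c).\<close>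
lemma light_edges_le_crossing_swaps:
  assumes V: "V \<noteq> {}" and x: "is_st V m e x" and y: "is_st V m e y"
  shows "card {i\<in>edges_of m y. w i \<le> t} - card {i\<in>edges_of m x. w i \<le> t}
         \<le> card {p\<in>improving_swaps w x. w (snd p) \<le> t \<and> t < w (fst p)}"
proof -
  define T where "T = edges_of m x"
  define A where "A = {i\<in>T. w i \<le> t}"
  define B where "B = {i\<in>edges_of m y. w i \<le> t}"
  define N where "N = {p\<in>improving_swaps w x. w (snd p) \<le> t \<and> t < w (fst p)}"
  have Tst: "spanning_tree_edges V m e T" using x unfolding is_st_def T_def .
  have Yst: "spanning_tree_edges V m e (edges_of m y)" using y unfolding is_st_def .
  note tT = spanning_tree_props[OF Tst V] and tY = spanning_tree_props[OF Yst V]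
  have AT: "A \<subseteq> T" unfolding A_def by auto
  have A: "A \<subseteq> {0..<m}" using AT tT by auto
  have B: "B \<subseteq> {0..<m}" using tY unfolding B_def by auto
  have fA: "forest A" using tT(2) has_cycle_mono[OF AT] by blast
  have fB: "forest B" using tY(2) has_cycle_mono[of B "edges_of m y"] unfolding B_def by blast
  obtain C where C: "C \<subseteq> B - A" "card C = card B - card A" "forest (A \<union> C)"
    using forest_augment_many[OF A B fA fB] by blast
  have partner: "\<exists>g. (g, c) \<in> N" if cC: "c \<in> C" for c
  proof -
    have cB: "c \<in> B" "c \<notin> A" using C cC by auto
    have cm: "c < m" using cB B by auto
    have wc: "w c \<le> t" using cB unfolding B_def by simp
    have cT: "c \<notin> T" using cB wc unfolding A_def by auto
    have "forest (insert c A)" using C(3) has_cycle_mono[of "insert c A" "A \<union> C"] cC by blast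
    then obtain g where g: "g \<in> T - A" "spanning_tree_edges V m e (insert c T - {g})"
      using tree_exchange[OF Tst V AT cm cT] by blast
    have gm: "g < m" "x g" using g(1) unfolding T_def edges_of_def by auto
    have xc: "\<not> x c" using cT cm unfolding T_def edges_of_def by auto
    have wg: "t < w g" using g(1) unfolding A_def by auto
    have "is_st V m e (swap x g c)"
      unfolding is_st_def edges_of_swap[OF gm(1) cm gm(2) xc] using g(2) T_def by simp
    then have "(g, c) \<in> N" unfolding N_def improving_swaps_def using gm cm xc wc wg by auto
    then show ?thesis by blast
  qed
  define G where "G c = (SOME g. (g, c) \<in> N)" for c
  have GN: "(G c, c) \<in> N" if "c \<in> C" for c using someI_ex[OF partner[OF that]] unfolding G_def .
  have "inj_on (\<lambda>c. (G c, c)) C" by (rule inj_onI) simp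
  moreover have "(\<lambda>c. (G c, c)) ` C \<subseteq> N" using GN by blast
  moreover have "finite N" unfolding N_def using finite_improving_swaps by simp
  ultimately have "card C \<le> card N" by (metis card_inj_on_le)
  then show ?thesis using C(2) unfolding N_def A_def B_def T_def by simp
qed

text \<open>Summing the previous
  lemma over all levels t below a common weight bound W gives this.\<close>
lemma weight_gap_le_swap_gains:
  assumes V: "V \<noteq> {}" and x: "is_st V m e x" and y: "is_st V m e y"
  shows "real (weight m w x) - real (weight m w y)
         \<le> (\<Sum>p\<in>improving_swaps w x. real (w (fst p)) - real (w (snd p)))"
proof -
  define W where "W = (\<Sum>i<m. w i)"
  have bdW: "w i \<le> W" if "i < m" for i
    unfolding W_def using that by (intro member_le_sum) auto
  define P where "P = improving_swaps w x"
  define T where "T = edges_of m x"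
  define Y where "Y = edges_of m y"
  define light where "light S t = card {i\<in>S. w i \<le> t}" for S t
  have Tst: "spanning_tree_edges V m e T" using x unfolding is_st_def T_def .
  have Yst: "spanning_tree_edges V m e Y" using y unfolding is_st_def Y_def .
  note tT = spanning_tree_props[OF Tst V] and tY = spanning_tree_props[OF Yst V]
  (* Both trees have |V| - 1 edges, so their weight difference is the difference of
     their light-edge counts, summed over all levels t < W. *)
  have layers: "(\<Sum>i\<in>S. w i) + (\<Sum>t<W. light S t) = W * card S"
    if "finite S" "S \<subseteq> {0..<m}" for S
    unfolding light_def using that bdW by (intro weight_layers) auto
  (* Per level, the excess of light edges is covered by the swaps crossing the level;
     summing the crossings over all levels yields the total gain. *)
  have "int (light Y t) - int (light T t)
      \<le> int (card {p\<in>P. w (snd p) \<le> t \<and> t < w (fst p)})" for t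
    using light_edges_le_crossing_swaps[OF V x y, of w t] unfolding light_def P_def T_def Y_def
    by linarith
  then have "(\<Sum>t<W. int (light Y t)) - (\<Sum>t<W. int (light T t))
      \<le> (\<Sum>t<W. int (card {p\<in>P. w (snd p) \<le> t \<and> t < w (fst p)}))"
    by (simp add: sum_subtractf[symmetric] sum_mono)
  also have "\<dots> = int (\<Sum>p\<in>P. w (fst p) - w (snd p))"
    unfolding of_nat_sum[symmetric] using finite_improving_swaps bdW
    by (subst sum_threshold_counts) (auto simp: P_def improving_swaps_def)
  finally have levels: "(\<Sum>t<W. int (light Y t)) - (\<Sum>t<W. int (light T t))
      \<le> (\<Sum>p\<in>P. int (w (fst p)) - int (w (snd p)))"
    unfolding of_nat_sum by (simp add: P_def improving_swaps_def of_nat_diff split_beta)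
  have "(\<Sum>i\<in>T. w i) + (\<Sum>t<W. light T t) = (\<Sum>i\<in>Y. w i) + (\<Sum>t<W. light Y t)"
    using layers[OF tT(5,4)] layers[OF tY(5,4)] tT(3) tY(3) by simp
  then have "int (\<Sum>i\<in>T. w i) + int (\<Sum>t<W. light T t) = int (\<Sum>i\<in>Y. w i) + int (\<Sum>t<W. light Y t)"
    by (metis of_nat_add)
  then have "int (weight m w x) - int (weight m w y)
      = (\<Sum>t<W. int (light Y t)) - (\<Sum>t<W. int (light T t))"
    unfolding weight_edges_of T_def[symmetric] Y_def[symmetric] of_nat_sum[symmetric]
    by linarith
  with levels have "int (weight m w x) - int (weight m w y)
      \<le> (\<Sum>p\<in>P. int (w (fst p)) - int (w (snd p)))" by simp
  then have "real_of_int (int (weight m w x) - int (weight m w y))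
      \<le> real_of_int (\<Sum>p\<in>P. int (w (fst p)) - int (w (snd p)))"
    by (simp only: of_int_le_iff)
  then show ?thesis unfolding P_def by simp
qed

end

lemma geometric_cutoff:
  fixes \<delta> D :: real
  assumes \<delta>: "0 < \<delta>" "\<delta> \<le> 1" and D: "1 \<le> D" and K: "ln D / \<delta> \<le> real K"
  shows "D * (1 - \<delta>) ^ K \<le> 1"
proof -
  have "(1 - \<delta>) ^ K \<le> exp (- \<delta>) ^ K"
    using \<delta> exp_ge_add_one_self[of "- \<delta>"] by (intro power_mono) auto
  also have "\<dots> = exp (- (real K * \<delta>))" by (simp add: exp_of_nat_mult[symmetric])
  also have "\<dots> \<le> exp (- ln D)" using K \<delta> by (simp add: divide_le_eq)
  also have "\<dots> = 1 / D" using D by (simp add: exp_minus inverse_eq_divide)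
  finally show ?thesis using D by (simp add: field_simps)
qed

text \<open>Tail-sum estimate: if the tail probabilities satisfy P(T > t) \<le> min(1, D (1-\<delta>)^t),
  then E[T] = \<Sum>t P(T > t) \<le> (1 + ln D)/\<delta> + 1.  The first \<lceil>ln D / \<delta>\<rceil> terms are
  bounded by 1, the remaining ones by a geometric series of total at most 1/\<delta>.\<close>
lemma suminf_tail_bound:
  fixes p :: "nat \<Rightarrow> real" and \<delta> D :: real
  assumes nonneg: "\<And>t. 0 \<le> p t" and le_1: "\<And>t. p t \<le> 1"
    and geom: "\<And>t. p t \<le> D * (1 - \<delta>) ^ t"
    and \<delta>: "0 < \<delta>" "\<delta> \<le> 1" and D: "1 \<le> D"
  shows "(\<Sum>t. ennreal (p t)) \<le> ennreal ((1 + ln D) / \<delta> + 1)"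
proof -
  define q where "q = 1 - \<delta>"
  define K where "K = nat \<lceil>ln D / \<delta>\<rceil>"
  define g where "g t = (if t < K then 1 else D * q ^ t)" for t
  have q: "0 \<le> q" "q < 1" using \<delta> unfolding q_def by auto
  have K_lower: "ln D / \<delta> \<le> real K" unfolding K_def by (rule real_nat_ceiling_ge)
  have K_upper: "real K \<le> ln D / \<delta> + 1"
  proof -
    have "0 \<le> ln D / \<delta>" using D \<delta> by simp
    then have "real K = of_int \<lceil>ln D / \<delta>\<rceil>" unfolding K_def by simp
    also have "\<dots> \<le> ln D / \<delta> + 1" by (rule of_int_ceiling_le_add_one)
    finally show ?thesis .
  qed
  have g_nonneg: "0 \<le> g t" for t unfolding g_def using D q by simp
  have p_le_g: "p t \<le> g t" for t unfolding g_def q_def using le_1 geom by simp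
  have g_shift: "g (n + K) = (D * q ^ K) * q ^ n" for n unfolding g_def by (simp add: power_add)
  have "summable (\<lambda>n. g (n + K))"
    unfolding g_shift using q by (intro summable_mult summable_geometric) simp
  then have g_summable: "summable g" by simp
  have "(\<Sum>n. g (n + K)) = (D * q ^ K) * (1 / (1 - q))"
    unfolding g_shift using q by (simp add: suminf_mult summable_geometric suminf_geometric)
  also have "\<dots> \<le> 1 / \<delta>"
    using geometric_cutoff[OF \<delta> D K_lower] \<delta> unfolding q_def by (simp add: divide_right_mono)
  finally have tail: "(\<Sum>n. g (n + K)) \<le> 1 / \<delta>" .
  have "(\<Sum>t. g t) = (\<Sum>n. g (n + K)) + (\<Sum>t<K. g t)"
    by (rule suminf_split_initial_segment[OF g_summable])
  also have "\<dots> \<le> 1 / \<delta> + (ln D / \<delta> + 1)"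
    using tail K_upper unfolding g_def by simp
  also have "\<dots> = (1 + ln D) / \<delta> + 1" by (simp add: add_divide_distrib)
  finally have g_bound: "(\<Sum>t. g t) \<le> (1 + ln D) / \<delta> + 1" .
  have "(\<Sum>t. ennreal (p t)) \<le> (\<Sum>t. ennreal (g t))"
    by (intro suminf_le summableI ennreal_leI p_le_g)
  also have "\<dots> = ennreal (\<Sum>t. g t)" by (rule suminf_ennreal2[OF g_nonneg g_summable])
  also have "\<dots> \<le> ennreal ((1 + ln D) / \<delta> + 1)" using g_bound by (rule ennreal_leI)
  finally show ?thesis .
qed

text \<open>The classical estimate (1 - 1/m)^(m-1) \<ge> 1/e, in the slightly weaker form needed
  for the probability of flipping exactly two prescribed bits.\<close>
lemma exp_minus_one_le_power:
  assumes "m \<ge> 2"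
  shows "exp (-1) \<le> (1 - 1 / real m) ^ (m - 2)"
proof -
  define k where "k = m - 1"
  have k: "k \<ge> 1" "real m = real k + 1" using assms unfolding k_def by auto
  have kp: "real k > 0" using k by simp
  have "(1 + 1 / real k) ^ k \<le> exp (1 / real k) ^ k"
    by (intro power_mono) (use exp_ge_add_one_self[of "1 / real k"] in \<open>auto simp: add.commute\<close>)
  also have "\<dots> = exp 1"
    using k by (simp add: exp_of_nat_mult[symmetric])
  finally have le_e: "(1 + 1 / real k) ^ k \<le> exp 1" .
  have "1 - 1 / real m = real k / real m" "1 + 1 / real k = real m / real k"
    using kp k by (simp_all add: field_simps)
  then have "(1 - 1 / real m) * (1 + 1 / real k) = 1"
    using kp k by simp
  then have inv: "(1 - 1 / real m) ^ k * (1 + 1 / real k) ^ k = 1"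
    by (simp add: power_mult_distrib[symmetric])
  have pos_base: "0 < 1 + 1 / real k" using kp by (intro add_pos_pos) auto
  then have pos: "0 < (1 + 1 / real k) ^ k" by simp
  have recip: "(1 - 1 / real m) ^ k = 1 / (1 + 1 / real k) ^ k"
    using inv pos_base by (simp add: eq_divide_eq)
  have "exp (-1::real) = 1 / exp 1" by (simp add: exp_minus inverse_eq_divide)
  also have "\<dots> \<le> 1 / (1 + 1 / real k) ^ k" using le_e pos by (intro divide_left_mono) auto
  also have "\<dots> = (1 - 1 / real m) ^ k" using recip by simp
  also have "\<dots> \<le> (1 - 1 / real m) ^ (m - 2)"
    using k assms unfolding k_def by (intro power_decreasing) auto
  finally show ?thesis .
qed

locale mst_ea = edge_indexed_graph +
  fixes w :: "nat \<Rightarrow> nat" and x0 :: "nat \<Rightarrow> bool"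
  assumes m_pos: "m \<ge> 1" and x0_length: "\<forall>i\<ge>m. \<not> x0 i" and x0_st: "is_st V m e x0"
begin

definition bitstrings :: "(nat \<Rightarrow> bool) set" where
  "bitstrings = {x. \<forall>i\<ge>m. \<not> x i}"

definition mutation :: "(nat \<Rightarrow> bool) pmf" where
  "mutation = Pi_pmf {0..<m} False (\<lambda>_. bernoulli_pmf (1 / real m))"

definition select :: "(nat \<Rightarrow> bool) \<Rightarrow> (nat \<Rightarrow> bool) \<Rightarrow> nat \<Rightarrow> bool" where
  "select x flip = (let y = (\<lambda>i. x i \<noteq> flip i) in
     if is_st V m e y \<and> weight m w y \<le> weight m w x then y else x)"

definition opt_weight :: nat where
  "opt_weight = (LEAST k. \<exists>y. is_st V m e y \<and> weight m w y = k)"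

definition gap :: "(nat \<Rightarrow> bool) \<Rightarrow> real" where
  "gap x = real (weight m w x) - real opt_weight"

definition flip_pair :: "nat \<times> nat \<Rightarrow> nat \<Rightarrow> bool" where
  "flip_pair p = (\<lambda>i. i = fst p \<or> i = snd p)"

definition \<delta> :: real where
  "\<delta> = 1 / (exp 1 * real m ^ 2)"

definition expect :: "(nat \<Rightarrow> bool) pmf \<Rightarrow> ((nat \<Rightarrow> bool) \<Rightarrow> real) \<Rightarrow> real" where
  "expect p f = (\<Sum>a\<in>bitstrings. f a * pmf p a)"

lemma finite_bitstrings: "finite bitstrings"
proof -
  have "bitstrings \<subseteq> (\<lambda>S i. i \<in> S) ` Pow {..<m}"
  proof
    fix x assume "x \<in> bitstrings"
    then have "x = (\<lambda>i. i \<in> {i. i < m \<and> x i})"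
      unfolding bitstrings_def by (auto simp: fun_eq_iff) (meson not_less)
    then show "x \<in> (\<lambda>S i. i \<in> S) ` Pow {..<m}" by blast
  qed
  then show ?thesis by (rule finite_subset) simp
qed

lemma set_pmf_mutation: "set_pmf mutation \<subseteq> bitstrings"
proof
  fix x assume "x \<in> set_pmf mutation"
  then have "x \<in> {f. \<forall>i. i \<notin> {0..<m} \<longrightarrow> f i = False}"
    unfolding mutation_def using set_Pi_pmf_subset[of "{0..<m}" False] by blast
  then show "x \<in> bitstrings" unfolding bitstrings_def by auto
qed

lemma ea_step_eq: "ea_step V m e w x = map_pmf (select x) mutation"
  unfolding ea_step_def select_def mutation_def ..

lemma select_bitstrings: "x \<in> bitstrings \<Longrightarrow> flip \<in> bitstrings \<Longrightarrow> select x flip \<in> bitstrings"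
  unfolding select_def bitstrings_def Let_def by auto

lemma select_st: "is_st V m e x \<Longrightarrow> is_st V m e (select x flip)"
  unfolding select_def Let_def by auto

lemma select_weight_le: "weight m w (select x flip) \<le> weight m w x"
  unfolding select_def Let_def by auto

lemma opt_weight_attained: "\<exists>y. is_st V m e y \<and> weight m w y = opt_weight"
  unfolding opt_weight_def by (rule LeastI_ex) (use x0_st in blast)

lemma opt_weight_le: "is_st V m e y \<Longrightarrow> opt_weight \<le> weight m w y"
  unfolding opt_weight_def by (rule Least_le) blast

lemma mst_iff_opt_weight: "is_st V m e x \<Longrightarrow> is_mst V m e w x \<longleftrightarrow> weight m w x = opt_weight"
  unfolding is_mst_def using opt_weight_attained opt_weight_le by (metis le_antisym)

lemma gap_nonneg: "is_st V m e x \<Longrightarrow> 0 \<le> gap x"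
  unfolding gap_def using opt_weight_le by simp

lemma gap_ge_1: "is_st V m e x \<Longrightarrow> \<not> is_mst V m e w x \<Longrightarrow> 1 \<le> gap x"
  using opt_weight_le mst_iff_opt_weight unfolding gap_def by fastforce

lemma V_nonempty: "V \<noteq> {}"
  using edge_ends[of 0] m_pos by auto

lemma \<delta>_pos: "0 < \<delta>"
  unfolding \<delta>_def using m_pos by simp

lemma \<delta>_le_1: "\<delta> \<le> 1"
proof -
  have "1 * 1 \<le> exp 1 * real m ^ 2" using m_pos by (intro mult_mono) auto
  then show ?thesis unfolding \<delta>_def by simp
qed

lemma select_flip_pair:
  assumes "p \<in> improving_swaps w x"
  shows "select x (flip_pair p) = swap x (fst p) (snd p)"
    and "gap (select x (flip_pair p)) = gap x - (real (w (fst p)) - real (w (snd p)))"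
proof -
  obtain f c where p: "p = (f, c)" by (cases p)
  have fc: "f < m" "c < m" "x f" "\<not> x c" "is_st V m e (swap x f c)" "w c \<le> w f"
    using assms p unfolding improving_swaps_def by auto
  have w: "weight m w (swap x f c) + w f = weight m w x + w c" by (rule weight_swap[OF fc(1-4)])
  have "(\<lambda>i. x i \<noteq> flip_pair p i) = swap x f c" unfolding flip_pair_def swap_def p by simp
  then show sel: "select x (flip_pair p) = swap x (fst p) (snd p)"
    unfolding select_def Let_def using fc(5,6) w p by simp
  have "real (weight m w (swap x f c)) + real (w f) = real (weight m w x) + real (w c)"
    using w by (metis of_nat_add)
  then show "gap (select x (flip_pair p)) = gap x - (real (w (fst p)) - real (w (snd p)))"
    using sel p by (simp add: gap_def)
qed

lemma flip_pair_inj: "inj_on flip_pair (improving_swaps w x)"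
proof (rule inj_onI)
  fix p q assume pq: "p \<in> improving_swaps w x" "q \<in> improving_swaps w x"
    and eq: "flip_pair p = flip_pair q"
  have x: "x (fst p)" "\<not> x (snd p)" "x (fst q)" "\<not> x (snd q)"
    using pq unfolding improving_swaps_def by auto
  have "(i = fst p \<or> i = snd p) = (i = fst q \<or> i = snd q)" for i
    using fun_cong[OF eq, of i] unfolding flip_pair_def by simp
  then have "fst p = fst q" "snd p = snd q" using x by metis+
  then show "p = q" by (simp add: prod_eq_iff)
qed

text \<open>A fixed mask flipping exactly two of the m bits has probability
  (1/m)^2 (1 - 1/m)^(m-2) \<ge> 1/(e m^2).\<close>
lemma pmf_mutation_flip_pair:
  assumes "fst p < m" "snd p < m" "fst p \<noteq> snd p"
  shows "\<delta> \<le> pmf mutation (flip_pair p)"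
proof -
  obtain f c where p: "p = (f, c)" by (cases p)
  have fc: "f < m" "c < m" "f \<noteq> c" using assms p by auto
  have m2: "m \<ge> 2" using fc by linarith
  have prob: "0 \<le> 1 / real m" "1 / real m \<le> (1::real)" using m_pos by auto
  have "pmf mutation (flip_pair p) = (\<Prod>i\<in>{0..<m}. if i \<in> {f, c} then 1 / real m else 1 - 1 / real m)"
    unfolding mutation_def using fc prob
    by (subst pmf_Pi) (auto simp: flip_pair_def p intro!: prod.cong)
  also have "\<dots> = (\<Prod>i\<in>{0..<m} \<inter> {i. i \<in> {f, c}}. 1 / real m)
      * (\<Prod>i\<in>{0..<m} \<inter> - {i. i \<in> {f, c}}. 1 - 1 / real m)"
    by (rule prod.If_cases) simp
  also have "{0..<m} \<inter> {i. i \<in> {f, c}} = {f, c}" using fc by auto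
  also have "{0..<m} \<inter> - {i. i \<in> {f, c}} = {0..<m} - {f, c}" by auto
  also have "(\<Prod>i\<in>{f, c}. 1 / real m) = (1 / real m) ^ 2"
    using fc by (simp add: power2_eq_square)
  also have "(\<Prod>i\<in>{0..<m} - {f, c}. 1 - 1 / real m) = (1 - 1 / real m) ^ (m - 2)"
    using fc by (simp add: card_Diff_subset numeral_2_eq_2)
  finally have eq: "pmf mutation (flip_pair p) = (1 / real m) ^ 2 * (1 - 1 / real m) ^ (m - 2)" .
  have "\<delta> = (1 / real m) ^ 2 * exp (-1)"
    unfolding \<delta>_def by (simp add: exp_minus field_simps power2_eq_square)
  also have "\<dots> \<le> (1 / real m) ^ 2 * (1 - 1 / real m) ^ (m - 2)"
    by (intro mult_left_mono exp_minus_one_le_power m2) simp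
  finally show ?thesis unfolding eq .
qed

lemma expect_eq_integral: "set_pmf p \<subseteq> bitstrings \<Longrightarrow> expect p f = measure_pmf.expectation p f"
  unfolding expect_def
  by (rule integral_measure_pmf_real[symmetric]) (use finite_bitstrings in auto)

lemma expect_map_pmf:
  assumes "set_pmf p \<subseteq> bitstrings" "g ` set_pmf p \<subseteq> bitstrings"
  shows "expect (map_pmf g p) f = expect p (\<lambda>x. f (g x))"
  using assms by (simp add: expect_eq_integral)

lemma expect_bind_pmf:
  assumes "set_pmf p \<subseteq> bitstrings"
  shows "expect (bind_pmf p q) f = expect p (\<lambda>x. expect (q x) f)"
proof -
  have "expect (bind_pmf p q) f = (\<Sum>a\<in>bitstrings. f a * expect p (\<lambda>x. pmf (q x) a))"
    unfolding expect_def[of "bind_pmf p q"] pmf_bind expect_eq_integral[OF assms] ..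
  also have "\<dots> = (\<Sum>a\<in>bitstrings. \<Sum>x\<in>bitstrings. f a * (pmf (q x) a * pmf p x))"
    unfolding expect_def by (simp add: sum_distrib_left)
  also have "\<dots> = (\<Sum>x\<in>bitstrings. \<Sum>a\<in>bitstrings. f a * (pmf (q x) a * pmf p x))"
    by (rule sum.swap)
  also have "\<dots> = expect p (\<lambda>x. expect (q x) f)"
    unfolding expect_def by (simp add: sum_distrib_right mult.assoc)
  finally show ?thesis .
qed

lemma expect_const: "set_pmf p \<subseteq> bitstrings \<Longrightarrow> expect p (\<lambda>_. k) = k"
  unfolding expect_def using sum_pmf_eq_1[OF finite_bitstrings]
  by (simp add: sum_distrib_left[symmetric])

lemma expect_return_pmf: "a \<in> bitstrings \<Longrightarrow> expect (return_pmf a) f = f a"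
  by (simp add: expect_eq_integral)

lemma expect_mono:
  assumes "\<And>x. x \<in> set_pmf p \<Longrightarrow> f x \<le> g x"
  shows "expect p f \<le> expect p g"
  unfolding expect_def
proof (rule sum_mono)
  fix a
  show "f a * pmf p a \<le> g a * pmf p a"
    using assms[of a] by (cases "a \<in> set_pmf p") (auto intro: mult_right_mono simp: set_pmf_eq)
qed

lemma expect_cmult: "expect p (\<lambda>x. c * f x) = c * expect p f"
  unfolding expect_def by (simp add: sum_distrib_left mult.assoc)

lemma expect_diff: "expect p (\<lambda>x. f x - g x) = expect p f - expect p g"
  unfolding expect_def by (simp add: left_diff_distrib sum_subtractf)

lemma expect_sum: "finite P \<Longrightarrow> expect p (\<lambda>x. \<Sum>q\<in>P. g q x) = (\<Sum>q\<in>P. expect p (g q))"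
  unfolding expect_def by (simp add: sum_distrib_right) (rule sum.swap)

lemma expect_indicator: "a \<in> bitstrings \<Longrightarrow> expect p (\<lambda>x. if x = a then k else 0) = k * pmf p a"
proof -
  assume a: "a \<in> bitstrings"
  have "expect p (\<lambda>x. if x = a then k else 0) = (\<Sum>x\<in>bitstrings. if x = a then k * pmf p a else 0)"
    unfolding expect_def by (intro sum.cong) auto
  also have "\<dots> = k * pmf p a" using finite_bitstrings a by simp
  finally show ?thesis .
qed

definition gain :: "nat \<times> nat \<Rightarrow> real" where
  "gain p = real (w (fst p)) - real (w (snd p))"

lemma gap_le_total_gain:
  assumes "is_st V m e x"
  shows "gap x \<le> (\<Sum>p\<in>improving_swaps w x. gain p)"
proof -
  obtain y where y: "is_st V m e y" "weight m w y = opt_weight" using opt_weight_attained by blast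
  show ?thesis
    using weight_gap_le_swap_gains[OF V_nonempty assms y(1), of w] y(2)
    unfolding gap_def gain_def by simp
qed

lemma gap_select_le:
  "gap (select x flip) \<le> gap x - (\<Sum>p\<in>improving_swaps w x. if flip = flip_pair p then gain p else 0)"
proof (cases "\<exists>p\<in>improving_swaps w x. flip = flip_pair p")
  case True
  then obtain p where p: "p \<in> improving_swaps w x" "flip = flip_pair p" by blast
  have "(\<Sum>q\<in>improving_swaps w x. if flip = flip_pair q then gain q else 0)
      = (\<Sum>q\<in>improving_swaps w x. if q = p then gain q else 0)"
    using p flip_pair_inj[of x] by (intro sum.cong refl) (auto dest: inj_onD)
  also have "\<dots> = gain p" using p(1) finite_improving_swaps by simp
  finally show ?thesis using select_flip_pair(2)[OF p(1)] p(2) unfolding gain_def by simp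
next
  case False
  then have "(\<Sum>p\<in>improving_swaps w x. if flip = flip_pair p then gain p else 0) = 0"
    by (intro sum.neutral) auto
  then show ?thesis using select_weight_le[of x flip] unfolding gap_def by simp
qed

lemma expected_gap_step:
  assumes "x \<in> bitstrings" "is_st V m e x"
  shows "expect (ea_step V m e w x) gap \<le> (1 - \<delta>) * gap x"
proof -
  define P where "P = improving_swaps w x"
  define g where "g p flip = (if flip = flip_pair p then gain p else 0)" for p flip
  have gain_nonneg: "0 \<le> gain p" if "p \<in> P" for p
    using that unfolding gain_def P_def improving_swaps_def by auto
  have flip_pair_in: "flip_pair p \<in> bitstrings" and p_valid: "fst p < m" "snd p < m" "fst p \<noteq> snd p"
    if "p \<in> P" for p
    using that unfolding P_def improving_swaps_def flip_pair_def bitstrings_def by auto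
  have "expect (ea_step V m e w x) gap = expect mutation (\<lambda>flip. gap (select x flip))"
    unfolding ea_step_eq using set_pmf_mutation select_bitstrings[OF assms(1)]
    by (intro expect_map_pmf) auto
  also have "\<dots> \<le> expect mutation (\<lambda>flip. gap x - (\<Sum>p\<in>P. g p flip))"
    unfolding P_def g_def by (intro expect_mono gap_select_le)
  also have "\<dots> = gap x - (\<Sum>p\<in>P. gain p * pmf mutation (flip_pair p))"
    unfolding expect_diff expect_const[OF set_pmf_mutation]
      expect_sum[OF finite_improving_swaps[of w x, folded P_def]]
    unfolding g_def by (simp add: expect_indicator flip_pair_in)
  also have "\<dots> \<le> gap x - (\<Sum>p\<in>P. gain p * \<delta>)"
    using gain_nonneg pmf_mutation_flip_pair p_valid
    by (simp add: sum_mono mult_left_mono)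
  also have "\<dots> \<le> gap x - \<delta> * gap x"
    using mult_left_mono[OF gap_le_total_gain[OF assms(2)], of \<delta>] \<delta>_pos
    by (simp add: sum_distrib_left mult.commute P_def)
  finally show ?thesis by (simp add: algebra_simps)
qed

definition current :: "nat \<Rightarrow> (nat \<Rightarrow> bool) pmf" where
  "current t = map_pmf last (ea_traj V m e w x0 t)"

lemma ea_traj_nonempty: "xs \<in> set_pmf (ea_traj V m e w x0 t) \<Longrightarrow> xs \<noteq> []"
  by (cases t) auto

lemma current_0: "current 0 = return_pmf x0"
  unfolding current_def by simp

lemma current_Suc: "current (Suc t) = bind_pmf (current t) (ea_step V m e w)"
  unfolding current_def by (simp add: map_bind_pmf map_pmf_comp bind_map_pmf)

lemma x0_bitstring: "x0 \<in> bitstrings"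
  using x0_length unfolding bitstrings_def by simp

lemma set_pmf_current: "set_pmf (current t) \<subseteq> {x. x \<in> bitstrings \<and> is_st V m e x}"
proof (induction t)
  case 0 then show ?case using current_0 x0_bitstring x0_st by simp
next
  case (Suc t)
  show ?case
  proof
    fix y assume "y \<in> set_pmf (current (Suc t))"
    then obtain x flip where x: "x \<in> set_pmf (current t)" and flip: "flip \<in> set_pmf mutation"
      and y: "y = select x flip"
      unfolding current_Suc ea_step_eq by auto
    then show "y \<in> {x. x \<in> bitstrings \<and> is_st V m e x}"
      using Suc set_pmf_mutation select_bitstrings select_st by blast
  qed
qed

lemma expected_gap_current: "expect (current t) gap \<le> (1 - \<delta>) ^ t * gap x0"
proof (induction t)
  case 0
  show ?case unfolding current_0 by (simp add: expect_return_pmf x0_bitstring)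
next
  case (Suc t)
  have support: "set_pmf (current t) \<subseteq> bitstrings" using set_pmf_current by blast
  have "expect (current (Suc t)) gap = expect (current t) (\<lambda>x. expect (ea_step V m e w x) gap)"
    unfolding current_Suc by (rule expect_bind_pmf[OF support])
  also have "\<dots> \<le> expect (current t) (\<lambda>x. (1 - \<delta>) * gap x)"
    using set_pmf_current expected_gap_step by (intro expect_mono) blast
  also have "\<dots> = (1 - \<delta>) * expect (current t) gap" by (rule expect_cmult)
  also have "\<dots> \<le> (1 - \<delta>) * ((1 - \<delta>) ^ t * gap x0)"
    using Suc \<delta>_le_1 by (intro mult_left_mono) auto
  finally show ?case by simp
qed

text \<open>Markov's inequality: a non-optimal spanning tree has gap at least 1.\<close>
lemma prob_current_not_mst: "measure_pmf.prob (current t) {x. \<not> is_mst V m e w x} \<le> expect (current t) gap"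
proof -
  let ?A = "{x. \<not> is_mst V m e w x}"
  have support: "set_pmf (current t) \<subseteq> bitstrings" using set_pmf_current by blast
  have "measure_pmf.prob (current t) ?A = expect (current t) (indicator ?A)"
    using support by (simp add: expect_eq_integral)
  also have "\<dots> \<le> expect (current t) gap"
  proof (rule expect_mono)
    fix x assume "x \<in> set_pmf (current t)"
    then have "is_st V m e x" using set_pmf_current by blast
    then show "indicator ?A x \<le> gap x"
      using gap_ge_1 gap_nonneg by (auto simp: indicator_def)
  qed
  finally show ?thesis .
qed

lemma prob_no_mst_le_current:
  "measure_pmf.prob (ea_traj V m e w x0 t) {xs. \<forall>y\<in>set xs. \<not> is_mst V m e w y}
     \<le> measure_pmf.prob (current t) {x. \<not> is_mst V m e w x}"
proof -
  let ?T = "ea_traj V m e w x0 t"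
  have "measure_pmf.prob ?T {xs. \<forall>y\<in>set xs. \<not> is_mst V m e w y}
      = measure_pmf.prob ?T ({xs. \<forall>y\<in>set xs. \<not> is_mst V m e w y} \<inter> set_pmf ?T)"
    by (simp add: measure_Int_set_pmf)
  also have "\<dots> \<le> measure_pmf.prob ?T (last -` {x. \<not> is_mst V m e w x})"
    using ea_traj_nonempty by (intro measure_pmf.finite_measure_mono) auto
  also have "\<dots> = measure_pmf.prob (current t) {x. \<not> is_mst V m e w x}"
    unfolding current_def by simp
  finally show ?thesis .
qed

lemma gap_le_m_max_weight: "gap x \<le> real m * real (Max (w ` {0..<m}))"
proof -
  have "weight m w x \<le> (\<Sum>i<m. Max (w ` {0..<m}))"
    unfolding weight_def by (intro sum_mono) auto
  then have "weight m w x \<le> m * Max (w ` {0..<m})" by simp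
  then have "real (weight m w x) \<le> real (m * Max (w ` {0..<m}))" by (rule of_nat_mono)
  then show ?thesis unfolding gap_def by simp
qed

lemma expected_opt_time_le:
  assumes "gap x0 \<le> D" "1 \<le> D"
  shows "expected_opt_time V m e w x0 \<le> ennreal ((1 + ln D) / \<delta> + 1)"
  unfolding expected_opt_time_def
proof (rule suminf_tail_bound[OF _ _ _ \<delta>_pos \<delta>_le_1 assms(2)])
  fix t
  have "(1 - \<delta>) ^ t * gap x0 \<le> D * (1 - \<delta>) ^ t"
    using mult_left_mono[OF assms(1), of "(1 - \<delta>) ^ t"] \<delta>_le_1 by (simp add: mult.commute)
  then show "measure_pmf.prob (ea_traj V m e w x0 t) {xs. \<forall>y\<in>set xs. \<not> is_mst V m e w y}
      \<le> D * (1 - \<delta>) ^ t"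
    using prob_no_mst_le_current prob_current_not_mst expected_gap_current
    by (meson order.trans)
qed auto

end

theorem theorem11:
  fixes V :: "'a set" and m :: nat and e :: "nat \<Rightarrow> 'a set"
    and w :: "nat \<Rightarrow> nat" and x0 :: "nat \<Rightarrow> bool"
  assumes "simple_graph V m e"
    and "connected_on V e {0..<m}"
    and "m \<ge> 1"
    and "\<forall>i<m. w i > 0"
    and "\<forall>i\<ge>m. \<not> x0 i"
    and "is_st V m e x0"
  shows "expected_opt_time V m e w x0
           \<le> ennreal (2 * exp 1 * real m ^ 2 * (1 + ln (real m) + ln (real (Max (w ` {0..<m})))))"
proof -
  interpret mst_ea V m e w x0
    using assms by unfold_locales auto
  define W where "W = Max (w ` {0..<m})"
  have "w 0 \<le> W" unfolding W_def using assms(3) by (intro Max_ge) auto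
  then have W_ge_1: "1 \<le> real W" using assms(3,4) by fastforce
  have m_ge_1: "1 \<le> real m" using assms(3) by simp
  have "(1 + ln (real m * real W)) / \<delta> + 1 = exp 1 * real m ^ 2 * (1 + ln (real m) + ln (real W)) + 1"
    using m_ge_1 W_ge_1 unfolding \<delta>_def by (simp add: ln_mult)
  also have "\<dots> \<le> 2 * exp 1 * real m ^ 2 * (1 + ln (real m) + ln (real W))"
    using m_ge_1 W_ge_1 one_le_exp_iff[of 1] one_le_power[OF m_ge_1, of 2] by (simp add: mult_ge1_I)
  finally show ?thesis
    using expected_opt_time_le[OF gap_le_m_max_weight] m_ge_1 W_ge_1 unfolding W_def
    by (meson ennreal_leI mult_ge1_I order.trans)
qed

end
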